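(* Let $K$ be a field, $\mathcal A$ a commutative $K$-algebra, and $V$ a $K$-subspace of $\mathcal A$ such that every element of $\sqrt V$ is algebraic over $K$. Then $V$ is a Mathieu subspace of $\mathcal A$ if and only if $\sqrt V$ is an ideal of $\mathcal A$.
   Context: Algebras are unital. $\sqrt V$ is the set of $a\in\mathcal A$ with $a^m\in V$ for all sufficiently large $m$. A $K$-subspace $V$ of a commutative algebra $\mathcal A$ is a Mathieu subspace if whenever $a\in\mathcal A$ satisfies $a^m\in V$ for all $m\ge1$, then for every $b\in\mathcal A$ there is $N$ with $ba^m\in V$ for all $m\ge N$. *)

theory Defs
  imports "HOL-Computational_Algebra.Polynomial"
begin

text \<open>A commutative (unital) K-algebra is modelled as a commutative ring 'a together
with its structure map phi :: 'k => 'a, a unital ring homomorphism from the field 'k.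
Scalar multiplication c . a is phi c * a.\<close>

definition unital_ring_hom :: "('k::field \<Rightarrow> 'a::comm_ring_1) \<Rightarrow> bool" where
  "unital_ring_hom \<phi> \<longleftrightarrow> \<phi> 1 = 1 \<and> (\<forall>x y. \<phi> (x + y) = \<phi> x + \<phi> y) \<and> (\<forall>x y. \<phi> (x * y) = \<phi> x * \<phi> y)"

definition K_subspace :: "('k::field \<Rightarrow> 'a::comm_ring_1) \<Rightarrow> 'a set \<Rightarrow> bool" where
  "K_subspace \<phi> V \<longleftrightarrow> 0 \<in> V \<and> (\<forall>x\<in>V. \<forall>y\<in>V. x + y \<in> V) \<and> (\<forall>c. \<forall>x\<in>V. \<phi> c * x \<in> V)"

definition radical_set :: "'a::comm_ring_1 set \<Rightarrow> 'a set" where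
  "radical_set V = {a. \<exists>N. \<forall>m\<ge>N. a ^ m \<in> V}"

definition algebraic_over :: "('k::field \<Rightarrow> 'a::comm_ring_1) \<Rightarrow> 'a \<Rightarrow> bool" where
  "algebraic_over \<phi> a \<longleftrightarrow> (\<exists>p::'k poly. p \<noteq> 0 \<and> poly (map_poly \<phi> p) a = 0)"

definition mathieu_subspace :: "'a::comm_ring_1 set \<Rightarrow> bool" where
  "mathieu_subspace V \<longleftrightarrow>
     (\<forall>a. (\<forall>m\<ge>1. a ^ m \<in> V) \<longrightarrow> (\<forall>b. \<exists>N. \<forall>m\<ge>N. b * a ^ m \<in> V))"

definition is_ideal :: "'a::comm_ring_1 set \<Rightarrow> bool" where
  "is_ideal I \<longleftrightarrow> 0 \<in> I \<and> (\<forall>x\<in>I. \<forall>y\<in>I. x + y \<in> I) \<and> (\<forall>b. \<forall>x\<in>I. b * x \<in> I)"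

end

theory Submission
  imports Defs
begin

text \<open>For an algebraic \<open>x \<in> \<surd>V\<close>, splitting the power of \<open>X\<close> off a nonzero annihilating
  polynomial gives \<open>x\<^sup>r (1 - x e) = 0\<close> with \<open>e \<in> K[x]\<close>, and then \<open>g = (x e)\<^sup>N\<close> for large \<open>N\<close> is an
  idempotent with \<open>x\<^sup>r = x\<^sup>r g\<close> lying in \<open>x\<^sup>N K[x] \<subseteq> V\<close>.
  If \<open>V\<close> is Mathieu, each such \<open>g\<close> generates an ideal \<open>gA \<subseteq> V\<close>, so \<open>\<surd>V\<close> is the radical of the
  largest ideal contained in \<open>V\<close>. Conversely, if \<open>\<surd>V\<close> is an ideal, every \<open>gc\<close> is an element of
  \<open>V\<close> plus a nilpotent \<open>n\<close> with \<open>gn = n\<close>; then \<open>g + n \<in> \<surd>V\<close> is a unit of the corner ring \<open>gA\<close>,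
  which forces it into \<open>V\<close>. Hence \<open>gA \<subseteq> V\<close> and \<open>b a\<^sup>m = b a\<^sup>m g \<in> V\<close>.\<close>

lemma unital_ring_hom_add: "unital_ring_hom \<phi> \<Longrightarrow> \<phi> (x + y) = \<phi> x + \<phi> y"
  and unital_ring_hom_mult: "unital_ring_hom \<phi> \<Longrightarrow> \<phi> (x * y) = \<phi> x * \<phi> y"
  and unital_ring_hom_1: "unital_ring_hom \<phi> \<Longrightarrow> \<phi> 1 = 1"
  unfolding unital_ring_hom_def by blast+

lemma unital_ring_hom_0: "unital_ring_hom \<phi> \<Longrightarrow> \<phi> 0 = 0"
  using unital_ring_hom_add[of \<phi> 0 0] by simp

lemma unital_ring_hom_minus: "unital_ring_hom \<phi> \<Longrightarrow> \<phi> (- x) = - \<phi> x"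
  using unital_ring_hom_add[of \<phi> "- x" x] unital_ring_hom_0[of \<phi>]
  by (simp add: eq_neg_iff_add_eq_0)

lemma unital_ring_hom_inverse:
  "unital_ring_hom \<phi> \<Longrightarrow> c \<noteq> 0 \<Longrightarrow> \<phi> (1 / c) * \<phi> c = 1"
  using unital_ring_hom_mult[of \<phi> "1 / c" c] unital_ring_hom_1[of \<phi>] by simp

lemma map_poly_add_hom:
  "unital_ring_hom \<phi> \<Longrightarrow> map_poly \<phi> (p + q) = map_poly \<phi> p + map_poly \<phi> q"
  by (rule poly_eqI) (simp add: coeff_map_poly unital_ring_hom_0 unital_ring_hom_add)

lemma map_poly_smult_hom:
  "unital_ring_hom \<phi> \<Longrightarrow> map_poly \<phi> (smult a q) = smult (\<phi> a) (map_poly \<phi> q)"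
  by (rule poly_eqI) (simp add: coeff_map_poly unital_ring_hom_0 unital_ring_hom_mult)

lemma map_poly_mult_hom:
  assumes "unital_ring_hom \<phi>"
  shows "map_poly \<phi> (p * q) = map_poly \<phi> p * map_poly \<phi> q"
  by (induction p)
    (simp_all add: assms map_poly_add_hom map_poly_smult_hom map_poly_pCons unital_ring_hom_0)

lemma map_poly_power_hom:
  "unital_ring_hom \<phi> \<Longrightarrow> map_poly \<phi> (p ^ n) = map_poly \<phi> p ^ n"
  by (induction n) (simp_all add: unital_ring_hom_1 map_poly_mult_hom)

lemma poly_map_poly_power_hom:
  "unital_ring_hom \<phi> \<Longrightarrow> poly (map_poly \<phi> (p ^ n)) y = poly (map_poly \<phi> p) y ^ n"
  by (simp add: map_poly_power_hom poly_power)

lemma poly_map_poly_pCons_hom: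
  "unital_ring_hom \<phi> \<Longrightarrow> poly (map_poly \<phi> (pCons a p)) y = \<phi> a + y * poly (map_poly \<phi> p) y"
  by (simp add: map_poly_pCons unital_ring_hom_0)

text \<open>Write a nonzero annihilating polynomial as \<open>P = X\<^sup>r (c + X Q\<^sub>1)\<close> with \<open>c \<noteq> 0\<close> and
  divide by \<open>c\<close>.\<close>
lemma algebraic_over_imp_fitting_relation:
  assumes hom: "unital_ring_hom \<phi>" and "algebraic_over \<phi> y"
  shows "\<exists>r E. y ^ r * (1 - y * poly (map_poly \<phi> E) y) = 0"
proof -
  obtain P where "P \<noteq> 0" and P_root: "poly (map_poly \<phi> P) y = 0"
    using assms(2) unfolding algebraic_over_def by blast
  then obtain Q where P: "P = [:0, 1:] ^ order 0 P * Q" and "\<not> [:0, 1:] dvd Q"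
    using order_decomp[of P 0] by auto
  obtain c Q\<^sub>1 where Q: "Q = pCons c Q\<^sub>1" by (cases Q)
  have "c \<noteq> 0"
    using \<open>\<not> [:0, 1:] dvd Q\<close> unfolding Q by (simp add: dvd_iff_poly_eq_0)
  define r where "r = order 0 P"
  define D where "D = poly (map_poly \<phi> Q\<^sub>1) y"
  have "poly (map_poly \<phi> P) y = poly (map_poly \<phi> [:0, 1:]) y ^ r * poly (map_poly \<phi> Q) y"
    unfolding r_def
    by (subst P) (simp only: hom map_poly_mult_hom poly_mult poly_map_poly_power_hom)
  also have "\<dots> = y ^ r * (\<phi> c + y * D)"
    by (simp add: hom map_poly_pCons unital_ring_hom_0 unital_ring_hom_1 Q D_def)
  finally have "y ^ r * (\<phi> c + y * D) = 0"
    using P_root by simp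
  define E where "E = smult (- (1 / c)) Q\<^sub>1"
  have E_eval: "poly (map_poly \<phi> E) y = - (\<phi> (1 / c) * D)"
    by (simp only: E_def D_def map_poly_smult_hom[OF hom] poly_smult
        unital_ring_hom_minus[OF hom] mult_minus_left)
  have "y ^ r * (1 - y * poly (map_poly \<phi> E) y)
      = y ^ r * (\<phi> (1 / c) * \<phi> c) + y ^ r * y * (\<phi> (1 / c) * D)"
    using unital_ring_hom_inverse[OF hom \<open>c \<noteq> 0\<close>] by (simp add: E_eval algebra_simps)
  also have "\<dots> = \<phi> (1 / c) * (y ^ r * (\<phi> c + y * D))"
    by (simp add: algebra_simps)
  finally have "y ^ r * (1 - y * poly (map_poly \<phi> E) y) = 0"
    using \<open>y ^ r * (\<phi> c + y * D) = 0\<close> by simp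
  then show ?thesis
    by blast
qed

lemma idempotent_power: "(g::'a::monoid_mult) * g = g \<Longrightarrow> 0 < n \<Longrightarrow> g ^ n = g"
proof (induction n)
  case (Suc n)
  then show ?case
    by (cases n) simp_all
qed simp

lemma power_absorbs_idempotent:
  fixes a g :: "'a::comm_ring_1"
  assumes "a ^ r * (1 - g) = 0" and "r \<le> m"
  shows "a ^ m * g = a ^ m"
proof -
  have "a ^ m = a ^ (m - r) * a ^ r"
    using \<open>r \<le> m\<close> by (simp flip: power_add)
  then have "a ^ m * (1 - g) = a ^ (m - r) * (a ^ r * (1 - g))"
    by (simp only: mult.assoc)
  then show ?thesis
    using assms(1) by (simp add: right_diff_distrib)
qed

text \<open>Fitting's lemma for the single element \<open>y\<close>: once \<open>y\<^sup>r\<close> kills \<open>1 - y e\<close>, each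
  \<open>(y e)\<^sup>N\<close> with \<open>N \<ge> r\<close> is the idempotent cutting out the component of the ring on which \<open>y\<close> is
  invertible.\<close>
lemma fitting_idempotent:
  fixes y e :: "'a::comm_ring_1"
  assumes ann: "y ^ r * (1 - y * e) = 0" and "r \<le> N"
  shows "(y * e) ^ N * (y * e) ^ N = (y * e) ^ N" and "y ^ r * (1 - (y * e) ^ N) = 0"
proof -
  have "1 - (y * e) ^ N = (1 - y * e) * (\<Sum>i<N. (y * e) ^ i)"
    by (rule one_diff_power_eq)
  then show kill: "y ^ r * (1 - (y * e) ^ N) = 0"
    using ann by (simp flip: mult.assoc)
  have "y ^ N = y ^ (N - r) * y ^ r"
    using \<open>r \<le> N\<close> by (simp flip: power_add)
  then have "(y * e) ^ N * (1 - (y * e) ^ N) = y ^ (N - r) * e ^ N * (y ^ r * (1 - (y * e) ^ N))"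
    by (simp add: power_mult_distrib ac_simps)
  then show "(y * e) ^ N * (y * e) ^ N = (y * e) ^ N"
    using kill by (simp add: right_diff_distrib)
qed

lemma complement_mult_nilpotent:
  fixes x f :: "'a::comm_ring_1"
  assumes "f * f = f" and "x ^ s * (1 - f) = 0"
  shows "((1 - f) * x) ^ Suc s = 0"
proof -
  have "(1 - f) * (1 - f) = 1 - f"
    using assms(1) by (simp add: algebra_simps)
  then have "((1 - f) * x) ^ Suc s = x * (x ^ s * (1 - f))"
    unfolding power_mult_distrib using idempotent_power[of "1 - f" "Suc s"]
    by (simp add: ac_simps)
  then show ?thesis
    using assms(2) by simp
qed

lemma nilpotent_one_plus_inverse:
  fixes n :: "'a::comm_ring_1"
  assumes "n ^ k = 0"
  shows "(1 + n) * (\<Sum>i<k. (- n) ^ i) = 1"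
  using one_diff_power_eq[of "- n" k] assms by (simp add: power_minus')

lemma K_subspace_minus:
  "unital_ring_hom \<phi> \<Longrightarrow> K_subspace \<phi> V \<Longrightarrow> x \<in> V \<Longrightarrow> - x \<in> V"
  using unital_ring_hom_minus[of \<phi> 1] unital_ring_hom_1[of \<phi>]
  unfolding K_subspace_def by (metis mult_minus1)

lemma K_subspace_power_mult_poly:
  assumes hom: "unital_ring_hom \<phi>" and sub: "K_subspace \<phi> V"
    and tail: "\<forall>m\<ge>M. y ^ m \<in> V" and "M \<le> N"
  shows "y ^ N * poly (map_poly \<phi> p) y \<in> V"
  using \<open>M \<le> N\<close>
proof (induction p arbitrary: N)
  case 0
  then show ?case
    using sub by (simp add: K_subspace_def)
next
  case (pCons a p)
  have "\<phi> a * y ^ N \<in> V"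
    using sub tail pCons.prems unfolding K_subspace_def by simp
  moreover have "y ^ Suc N * poly (map_poly \<phi> p) y \<in> V"
    by (rule pCons.IH) (use pCons.prems in simp)
  moreover have "y ^ N * poly (map_poly \<phi> (pCons a p)) y
      = \<phi> a * y ^ N + y ^ Suc N * poly (map_poly \<phi> p) y"
    by (simp add: poly_map_poly_pCons_hom[OF hom] algebra_simps)
  ultimately show ?case
    using sub unfolding K_subspace_def by simp
qed

lemma radical_set_mono: "I \<subseteq> V \<Longrightarrow> radical_set I \<subseteq> radical_set V"
  unfolding radical_set_def by blast

lemma nilpotent_in_radical_set:
  assumes "n ^ k = 0" and "0 \<in> V"
  shows "n \<in> radical_set V"
  unfolding radical_set_def
proof (intro CollectI exI allI impI)
  fix m
  assume "k \<le> m"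
  then have "n ^ m = n ^ k * n ^ (m - k)"
    by (simp flip: power_add)
  then show "n ^ m \<in> V"
    using assms by simp
qed

lemma is_ideal_mult: "is_ideal I \<Longrightarrow> a \<in> I \<Longrightarrow> b * a \<in> I"
  unfolding is_ideal_def by blast

lemma is_ideal_sum:
  assumes "is_ideal I" and "\<And>i. i \<in> F \<Longrightarrow> f i \<in> I"
  shows "sum f F \<in> I"
  using assms(2)
  by (induction F rule: infinite_finite_induct) (use assms(1) in \<open>auto simp: is_ideal_def\<close>)

lemma is_ideal_radical_set:
  assumes I: "is_ideal I"
  shows "is_ideal (radical_set I)"
  unfolding is_ideal_def
proof (intro conjI ballI allI)
  show "0 \<in> radical_set I"
    using I by (intro nilpotent_in_radical_set[of 0 1]) (simp_all add: is_ideal_def)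
next
  fix x y
  assume "x \<in> radical_set I" "y \<in> radical_set I"
  then obtain Nx Ny where x: "\<forall>m\<ge>Nx. x ^ m \<in> I" and y: "\<forall>m\<ge>Ny. y ^ m \<in> I"
    unfolding radical_set_def by blast
  have "(x + y) ^ m \<in> I" if "Nx + Ny \<le> m" for m
    unfolding binomial_ring
  proof (rule is_ideal_sum[OF I])
    fix k
    have "Nx \<le> k \<or> Ny \<le> m - k"
      using that by linarith
    then show "of_nat (m choose k) * x ^ k * y ^ (m - k) \<in> I"
    proof
      assume "Nx \<le> k"
      then show ?thesis
        using is_ideal_mult[OF I, of "x ^ k" "of_nat (m choose k) * y ^ (m - k)"] x
        by (simp add: ac_simps)
    next
      assume "Ny \<le> m - k"
      then show ?thesis
        using is_ideal_mult[OF I, of "y ^ (m - k)" "of_nat (m choose k) * x ^ k"] y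
        by (simp add: ac_simps)
    qed
  qed
  then show "x + y \<in> radical_set I"
    unfolding radical_set_def by blast
next
  fix b x
  assume "x \<in> radical_set I"
  then show "b * x \<in> radical_set I"
    using is_ideal_mult[OF I] unfolding radical_set_def by (auto simp: power_mult_distrib)
qed

definition largest_ideal :: "'a::comm_ring_1 set \<Rightarrow> 'a set" where
  "largest_ideal V = {a. \<forall>b. b * a \<in> V}"

lemma largest_ideal_subset: "largest_ideal V \<subseteq> V"
  by (auto simp: largest_ideal_def dest: spec[of _ 1])

lemma is_ideal_largest_ideal:
  assumes "0 \<in> V" and "\<And>x y. x \<in> V \<Longrightarrow> y \<in> V \<Longrightarrow> x + y \<in> V"
  shows "is_ideal (largest_ideal V)"
  using assms unfolding is_ideal_def largest_ideal_def
  by (auto simp: distrib_left simp flip: mult.assoc)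

lemma mathieu_subspace_idempotent:
  assumes "mathieu_subspace V" and "g * g = g" and "g \<in> V"
  shows "g \<in> largest_ideal V"
  unfolding largest_ideal_def
proof (intro CollectI allI)
  fix b
  have "\<forall>m\<ge>1. g ^ m \<in> V"
    using idempotent_power[OF assms(2)] assms(3) by auto
  then obtain N where "\<forall>m\<ge>N. b * g ^ m \<in> V"
    using assms(1) unfolding mathieu_subspace_def by blast
  then have "b * g ^ Suc N \<in> V"
    by (simp del: power_Suc)
  then show "b * g \<in> V"
    using idempotent_power[OF assms(2), of "Suc N"] by (simp del: power_Suc)
qed

locale algebraic_radical =
  fixes \<phi> :: "'k::field \<Rightarrow> 'a::comm_ring_1" and V :: "'a set"
  assumes hom: "unital_ring_hom \<phi>"
    and subspace: "K_subspace \<phi> V"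
    and radical_algebraic: "\<forall>a\<in>radical_set V. algebraic_over \<phi> a"
begin

lemma zero_mem: "0 \<in> V"
  and add_mem: "x \<in> V \<Longrightarrow> y \<in> V \<Longrightarrow> x + y \<in> V"
  using subspace unfolding K_subspace_def by blast+

lemma radical_set_idempotent:
  assumes "x \<in> radical_set V"
  obtains g r where "g * g = g" and "x ^ r * (1 - g) = 0" and "g \<in> V" and "x * g \<in> V"
proof -
  obtain M where tail: "\<forall>m\<ge>M. x ^ m \<in> V"
    using assms unfolding radical_set_def by blast
  obtain r E where ann: "x ^ r * (1 - x * poly (map_poly \<phi> E) x) = 0"
    using algebraic_over_imp_fitting_relation[OF hom] radical_algebraic assms by blast
  define N where "N = max M r"
  define g where "g = (x * poly (map_poly \<phi> E) x) ^ N"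
  have "g * g = g" and "x ^ r * (1 - g) = 0"
    using fitting_idempotent[OF ann, of N] by (simp_all add: N_def g_def)
  moreover have "g \<in> V" and "x * g \<in> V"
  proof -
    have g_eq: "g = x ^ N * poly (map_poly \<phi> (E ^ N)) x"
      by (simp add: g_def power_mult_distrib poly_map_poly_power_hom[OF hom])
    show "g \<in> V"
      unfolding g_eq by (rule K_subspace_power_mult_poly[OF hom subspace tail]) (simp add: N_def)
    have "x * g = x ^ Suc N * poly (map_poly \<phi> (E ^ N)) x"
      by (simp add: g_eq mult.assoc)
    also have "\<dots> \<in> V"
      by (rule K_subspace_power_mult_poly[OF hom subspace tail]) (simp add: N_def)
    finally show "x * g \<in> V" .
  qed
  ultimately show thesis
    using that by blast
qed

lemma mathieu_subspace_imp_is_ideal_radical_set: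
  assumes "mathieu_subspace V"
  shows "is_ideal (radical_set V)"
proof -
  have "radical_set V \<subseteq> radical_set (largest_ideal V)"
  proof
    fix x
    assume "x \<in> radical_set V"
    then obtain g r where "g * g = g" and kill: "x ^ r * (1 - g) = 0" and "g \<in> V"
      by (rule radical_set_idempotent)
    then have "g \<in> largest_ideal V"
      using mathieu_subspace_idempotent[OF assms] by blast
    have "b * x ^ m \<in> V" if "r \<le> m" for b m
    proof -
      have "b * x ^ m * g \<in> V"
        using \<open>g \<in> largest_ideal V\<close> unfolding largest_ideal_def by blast
      then show ?thesis
        using power_absorbs_idempotent[OF kill that] by (simp add: mult.assoc)
    qed
    then have "x ^ m \<in> largest_ideal V" if "r \<le> m" for m
      using that unfolding largest_ideal_def by blast
    then show "x \<in> radical_set (largest_ideal V)"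
      unfolding radical_set_def by blast
  qed
  moreover have "radical_set (largest_ideal V) \<subseteq> radical_set V"
    by (rule radical_set_mono[OF largest_ideal_subset])
  ultimately show ?thesis
    using is_ideal_radical_set[OF is_ideal_largest_ideal[OF zero_mem add_mem]] by simp
qed

text \<open>For the idempotent \<open>h\<close> attached to \<open>u\<close>, \<open>u\<^sup>p (1 - h) = 0\<close> and \<open>g = g (u v)\<^sup>p\<close> give
  \<open>g h = g\<close>, hence \<open>u = u h \<in> V\<close>.\<close>
lemma corner_unit_mem:
  assumes "u \<in> radical_set V" and idem: "g * g = g" and "g * u = u" and "u * v = g"
  shows "u \<in> V"
proof -
  obtain h p where kill: "u ^ p * (1 - h) = 0" and "u * h \<in> V"
    by (rule radical_set_idempotent[OF assms(1)])
  have "g * g ^ p = g"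
    using idempotent_power[OF idem, of "Suc p"] by simp
  then have "g * (1 - h) = g * (u * v) ^ p * (1 - h)"
    using assms(4) by simp
  also have "\<dots> = g * v ^ p * (u ^ p * (1 - h))"
    by (simp add: power_mult_distrib ac_simps)
  finally have "g * h = g"
    using kill by (simp add: right_diff_distrib)
  have "u * h = (g * h) * u"
    using assms(3) by (metis mult.assoc mult.commute)
  then show ?thesis
    using \<open>u * h \<in> V\<close> \<open>g * h = g\<close> assms(3) by simp
qed

lemma idempotent_in_largest_ideal:
  assumes ideal: "is_ideal (radical_set V)" and idem: "g * g = g" and "g \<in> V"
  shows "g \<in> largest_ideal V"
  unfolding largest_ideal_def
proof (intro CollectI allI)
  fix c
  have g_rad: "g \<in> radical_set V"
    unfolding radical_set_def using idempotent_power[OF idem] \<open>g \<in> V\<close>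
    by (intro CollectI exI[of _ 1]) auto
  define x where "x = c * g"
  have "x \<in> radical_set V"
    using ideal g_rad unfolding x_def is_ideal_def by blast
  then obtain f s where "f * f = f" and kill: "x ^ s * (1 - f) = 0" and "x * f \<in> V"
    by (rule radical_set_idempotent)
  define n where "n = (1 - f) * x"
  have nil: "n ^ Suc s = 0"
    unfolding n_def using \<open>f * f = f\<close> kill by (rule complement_mult_nilpotent)
  have "g * n = (1 - f) * c * (g * g)"
    by (simp only: n_def x_def ac_simps)
  then have gn: "g * n = n"
    using idem by (simp add: n_def x_def ac_simps)
  text \<open>\<open>g + n\<close> is a unit of the corner ring \<open>gA\<close>, with inverse \<open>g (1 + n)\<^sup>-\<^sup>1\<close>.\<close>
  define u where "u = g + n"
  have "u \<in> radical_set V"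
    using ideal g_rad nilpotent_in_radical_set[OF nil zero_mem]
    unfolding u_def is_ideal_def by blast
  moreover have "u * (g * (\<Sum>i<Suc s. (- n) ^ i)) = g"
  proof -
    have "u = g * (1 + n)"
      using gn by (simp add: u_def distrib_left)
    then have "u * (g * (\<Sum>i<Suc s. (- n) ^ i)) = (g * g) * ((1 + n) * (\<Sum>i<Suc s. (- n) ^ i))"
      by (simp only: ac_simps)
    then show ?thesis
      using idem nilpotent_one_plus_inverse[OF nil] by simp
  qed
  moreover have "g * u = u"
    using idem gn by (simp add: u_def distrib_left)
  ultimately have "u \<in> V"
    using corner_unit_mem idem by blast
  then have "u + - g \<in> V"
    using add_mem K_subspace_minus[OF hom subspace \<open>g \<in> V\<close>] by blast
  then have "n \<in> V"
    by (simp add: u_def)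
  moreover have "x = x * f + n"
    by (simp add: n_def algebra_simps)
  ultimately show "c * g \<in> V"
    using add_mem[OF \<open>x * f \<in> V\<close>] x_def by metis
qed

lemma is_ideal_radical_set_imp_mathieu_subspace:
  assumes "is_ideal (radical_set V)"
  shows "mathieu_subspace V"
  unfolding mathieu_subspace_def
proof (intro allI impI)
  fix a b
  assume "\<forall>m\<ge>1. a ^ m \<in> V"
  then have "a \<in> radical_set V"
    unfolding radical_set_def by blast
  then obtain g r where "g * g = g" and kill: "a ^ r * (1 - g) = 0" and "g \<in> V"
    by (rule radical_set_idempotent)
  then have "g \<in> largest_ideal V"
    using idempotent_in_largest_ideal[OF assms] by blast
  then have "b * a ^ m \<in> V" if "r \<le> m" for m
    using power_absorbs_idempotent[OF kill that] unfolding largest_ideal_def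
    by (metis mem_Collect_eq mult.assoc)
  then show "\<exists>N. \<forall>m\<ge>N. b * a ^ m \<in> V"
    by blast
qed

end

theorem theorem4p12:
  fixes \<phi> :: "'k::field \<Rightarrow> 'a::comm_ring_1" and V :: "'a set"
  assumes "unital_ring_hom \<phi>"
    and "K_subspace \<phi> V"
    and "\<forall>a\<in>radical_set V. algebraic_over \<phi> a"
  shows "mathieu_subspace V \<longleftrightarrow> is_ideal (radical_set V)"
proof -
  interpret algebraic_radical \<phi> V
    using assms by unfold_locales
  show ?thesis
    using mathieu_subspace_imp_is_ideal_radical_set is_ideal_radical_set_imp_mathieu_subspace
    by blast
qed

end
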